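(* Let $G=(V,E)$ be a strongly connected digraph with $V=\{v_1,\dots,v_n\}$. Then every evolution of the weight-balancing mirror algorithm, i.e., every sequence $(A_k)_{k\geq0}$ with $A_0\in\operatorname{Adj}(G)$ and $A_{k+1}\in g_{\mathrm{imcor}}(A_k)$ for all $k$ in which the choices satisfy the fair-decision rule, converges in finite time to a weight-balanced adjacency matrix: there exists $K$ such that $A_K$ is weight-balanced and $A_k=A_K$ for all $k\geq K$.
   Context: A digraph $G=(V,E)$ has finite vertex set $V$ and edge set $E\subseteq V\times V$; it is strongly connected if there is a directed path between every ordered pair of distinct vertices. $\mathcal{N}^{\mathrm{out}}(v_i)=\{v_j:(v_i,v_j)\in E\}$. $\operatorname{Adj}(G)$ is the set of matrices $A=(a_{ij})\in\mathbb{R}^{n\times n}_{\geq0}$ with $a_{ij}>0$ if $(v_i,v_j)\in E$ and $a_{ij}=0$ otherwise. For $A\in\operatorname{Adj}(G)$, the imbalance of $v_i$ is $\omega(v_i)=\sum_j a_{ji}-\sum_j a_{ij}$; $A$ is weight-balanced if all imbalances are zero. Let $\Omega_{\min}(v_i)=\{v_j\in\mathcal{N}^{\mathrm{out}}(v_i):\omega(v_j)=\min_{v_l\in\mathcal{N}^{\mathrm{out}}(v_i)}\omega(v_l)\}$. The map $g_{\mathrm{imcor}}:\operatorname{Adj}(G)\rightrightarrows\operatorname{Adj}(G)$ assigns to $A$ the set of all $B\in\operatorname{Adj}(G)$ such that for each $i$ there exists $j^*$ with $v_{j^*}\in\Omega_{\min}(v_i)$ and $b_{ij}=a_{ij}+\omega(v_i)$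 if $\omega(v_i)>0$ and $j=j^*$, $b_{ij}=a_{ij}$ otherwise (imbalances computed w.r.t. $A$). Fair-decision rule: when an agent with positive imbalance has more than one out-neighbor attaining the minimum imbalance, it chooses one of them, but the next time it must choose among out-neighbors with the same minimum imbalance it chooses a different (new) out-neighbor. *)

theory Defs
  imports Complex_Main
begin

text \<open>Vertices v_1..v_n are represented by the indices 0..n-1; a digraph is an edge
  relation E on {..<n}; a matrix is a function nat => nat => real (entries outside
  the index range are required to be 0).\<close>

definition strongly_connected :: "nat \<Rightarrow> (nat \<times> nat) set \<Rightarrow> bool" where
  "strongly_connected n E \<longleftrightarrow>
     (\<forall>i<n. \<forall>j<n. i \<noteq> j \<longrightarrow> (i, j) \<in> E\<^sup>+)"

definition out_nbrs :: "(nat \<times> nat) set \<Rightarrow> nat \<Rightarrow> nat set" where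
  "out_nbrs E i = {j. (i, j) \<in> E}"

definition in_Adj :: "nat \<Rightarrow> (nat \<times> nat) set \<Rightarrow> (nat \<Rightarrow> nat \<Rightarrow> real) \<Rightarrow> bool" where
  "in_Adj n E A \<longleftrightarrow> (\<forall>i j. if (i, j) \<in> E then A i j > 0 else A i j = 0)"

definition imbalance :: "nat \<Rightarrow> (nat \<Rightarrow> nat \<Rightarrow> real) \<Rightarrow> nat \<Rightarrow> real" where
  "imbalance n A i = (\<Sum>j<n. A j i) - (\<Sum>j<n. A i j)"

definition weight_balanced :: "nat \<Rightarrow> (nat \<Rightarrow> nat \<Rightarrow> real) \<Rightarrow> bool" where
  "weight_balanced n A \<longleftrightarrow> (\<forall>i<n. imbalance n A i = 0)"

definition Omega_min :: "nat \<Rightarrow> (nat \<times> nat) set \<Rightarrow> (nat \<Rightarrow> nat \<Rightarrow> real) \<Rightarrow> nat \<Rightarrow> nat set" where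
  "Omega_min n E A i =
     {j \<in> out_nbrs E i. imbalance n A j = Min (imbalance n A ` out_nbrs E i)}"

text \<open>B arises from A by the mirror correction with choice function js (js i = j* for agent i).\<close>
definition imcor_step_with ::
  "nat \<Rightarrow> (nat \<times> nat) set \<Rightarrow> (nat \<Rightarrow> nat \<Rightarrow> real) \<Rightarrow> (nat \<Rightarrow> nat) \<Rightarrow> (nat \<Rightarrow> nat \<Rightarrow> real) \<Rightarrow> bool" where
  "imcor_step_with n E A js B \<longleftrightarrow>
     in_Adj n E B \<and>
     (\<forall>i<n. js i \<in> Omega_min n E A i) \<and>
     (\<forall>i<n. \<forall>j<n. B i j =
        (if 0 < imbalance n A i \<and> j = js i then A i j + imbalance n A i else A i j))"

definition g_imcor :: "nat \<Rightarrow> (nat \<times> nat) set \<Rightarrow> (nat \<Rightarrow> nat \<Rightarrow> real) \<Rightarrow> (nat \<Rightarrow> nat \<Rightarrow> real) set" where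
  "g_imcor n E A = {B. \<exists>js. imcor_step_with n E A js B}"

definition tie_time ::
  "nat \<Rightarrow> (nat \<times> nat) set \<Rightarrow> (nat \<Rightarrow> nat \<Rightarrow> nat \<Rightarrow> real) \<Rightarrow> nat \<Rightarrow> nat set \<Rightarrow> nat \<Rightarrow> bool" where
  "tie_time n E A i S k \<longleftrightarrow> 0 < imbalance n (A k) i \<and> Omega_min n E (A k) i = S"

text \<open>Fair-decision rule: whenever agent i faces the same tie set S (card S > 1) again,
  it picks an out-neighbour it has not picked yet for S; an earlier choice may only be
  repeated once all members of S have been chosen in between.\<close>
definition fair_decisions ::
  "nat \<Rightarrow> (nat \<times> nat) set \<Rightarrow> (nat \<Rightarrow> nat \<Rightarrow> nat \<Rightarrow> real) \<Rightarrow> (nat \<Rightarrow> nat \<Rightarrow> nat) \<Rightarrow> bool" where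
  "fair_decisions n E A c \<longleftrightarrow>
     (\<forall>i<n. \<forall>S. 1 < card S \<longrightarrow>
        (\<forall>k' k. k' < k \<and> tie_time n E A i S k' \<and> tie_time n E A i S k \<and> c k i = c k' i \<longrightarrow>
           S \<subseteq> {c m i | m. k' \<le> m \<and> m < k \<and> tie_time n E A i S m}))"

end

theory Submission
  imports Defs "HOL-Library.Infinite_Set"
begin

text \<open>A mirror step never makes a non-negative imbalance negative, and every agent that is
  positive after the step received mass from a positive agent. Hence the set of negative agents
  and the number of positive agents are non-increasing and eventually constant; from then on no
  positive agent has a negative out-neighbour. If the matrix never becomes balanced, some agent is
  positive infinitely often, and so is each of its out-neighbours: an out-neighbour that is
  eventually never positive has imbalance 0, the minimum, whenever the former is positive, and the
  fair-decision rule forces it to be chosen, which makes it positive. By strong connectivity every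
  agent is then positive infinitely often, including an agent that stays negative forever.\<close>

definition positive_agents :: "nat \<Rightarrow> (nat \<Rightarrow> nat \<Rightarrow> real) \<Rightarrow> nat set" where
  "positive_agents n A = {i. i < n \<and> 0 < imbalance n A i}"

definition negative_agents :: "nat \<Rightarrow> (nat \<Rightarrow> nat \<Rightarrow> real) \<Rightarrow> nat set" where
  "negative_agents n A = {i. i < n \<and> imbalance n A i < 0}"

lemma finite_positive_agents [simp]: "finite (positive_agents n A)"
  by (simp add: positive_agents_def)

lemma finite_negative_agents [simp]: "finite (negative_agents n A)"
  by (simp add: negative_agents_def)

lemma finite_out_nbrs:
  assumes "E \<subseteq> {..<n} \<times> {..<n}"
  shows "finite (out_nbrs E j)"
  by (rule finite_subset[of _ "{..<n}"]) (use assms in \<open>auto simp: out_nbrs_def\<close>)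

lemma Omega_minI:
  assumes "finite (out_nbrs E j)" and "(j, i) \<in> E"
    and "\<And>x. (j, x) \<in> E \<Longrightarrow> imbalance n A i \<le> imbalance n A x"
  shows "i \<in> Omega_min n E A j"
proof -
  have "Min (imbalance n A ` out_nbrs E j) = imbalance n A i"
    using assms by (intro Min_eqI) (auto simp: out_nbrs_def)
  then show ?thesis using assms(2) by (simp add: Omega_min_def out_nbrs_def)
qed

lemma Omega_min_le:
  assumes "finite (out_nbrs E j)" and "i' \<in> Omega_min n E A j" and "(j, i) \<in> E"
  shows "imbalance n A i' \<le> imbalance n A i"
  using assms by (auto simp: Omega_min_def out_nbrs_def intro!: Min_le)

lemma sum_imbalance_eq_0: "(\<Sum>i<n. imbalance n A i) = 0"
  unfolding imbalance_def sum_subtractf using sum.swap[of "\<lambda>i j. A j i" "{..<n}" "{..<n}"] by simp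

lemma weight_balanced_iff_no_positive_agents:
  "weight_balanced n A \<longleftrightarrow> positive_agents n A = {}"
proof
  assume "positive_agents n A = {}"
  then have "\<forall>i\<in>{..<n}. 0 \<le> - imbalance n A i"
    unfolding positive_agents_def by force
  moreover have "(\<Sum>i<n. - imbalance n A i) = 0"
    using sum_imbalance_eq_0[of n A] by (simp add: sum_negf)
  ultimately show "weight_balanced n A"
    using sum_nonneg_eq_0_iff[of "{..<n}" "\<lambda>i. - imbalance n A i"]
    by (simp add: weight_balanced_def)
qed (auto simp: weight_balanced_def positive_agents_def)

lemma negative_agents_nonempty:
  assumes "positive_agents n A \<noteq> {}"
  shows "negative_agents n A \<noteq> {}"
proof
  assume "negative_agents n A = {}"
  then have "\<forall>i\<in>{..<n}. 0 \<le> imbalance n A i"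
    unfolding negative_agents_def by force
  with sum_imbalance_eq_0[of n A] have "\<forall>i\<in>{..<n}. imbalance n A i = 0"
    using sum_nonneg_eq_0_iff[of "{..<n}" "imbalance n A"] by simp
  with assms show False by (auto simp: positive_agents_def)
qed

lemma imcor_step_choice:
  assumes "E \<subseteq> {..<n} \<times> {..<n}" and "imcor_step_with n E A js B" and "i < n"
  shows "js i \<in> Omega_min n E A i" and "(i, js i) \<in> E" and "js i < n"
  using assms by (auto simp: imcor_step_with_def Omega_min_def out_nbrs_def)

lemma imbalance_imcor_step:
  assumes E: "E \<subseteq> {..<n} \<times> {..<n}" and step: "imcor_step_with n E A js B" and i: "i < n"
  shows "imbalance n B i = min (imbalance n A i) 0
     + (\<Sum>l<n. if 0 < imbalance n A l \<and> js l = i then imbalance n A l else 0)"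
proof -
  let ?corr = "\<lambda>l. if 0 < imbalance n A l then imbalance n A l else 0"
  have js: "js i < n" by (rule imcor_step_choice[OF E step i])
  have B: "B a b = A a b + (if b = js a then ?corr a else 0)" if "a < n" "b < n" for a b
    using step that unfolding imcor_step_with_def by auto
  have "(\<Sum>l<n. B l i) = (\<Sum>l<n. A l i)
     + (\<Sum>l<n. if 0 < imbalance n A l \<and> js l = i then imbalance n A l else 0)"
    unfolding sum.distrib[symmetric] by (rule sum.cong) (auto simp: B i)
  moreover have "(\<Sum>j<n. B i j) = (\<Sum>j<n. A i j) + ?corr i"
    using js by (simp add: B i sum.distrib sum.delta)
  ultimately show ?thesis
    by (simp add: imbalance_def[of n B i] imbalance_def[of n A i])
qed

lemma imcor_step_imbalance_nonneg:
  assumes "E \<subseteq> {..<n} \<times> {..<n}" and "imcor_step_with n E A js B" and "i < n"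
    and "0 \<le> imbalance n A i"
  shows "0 \<le> imbalance n B i"
  using assms by (simp add: imbalance_imcor_step sum_nonneg)

lemma imcor_step_negative_agents_subset:
  assumes "E \<subseteq> {..<n} \<times> {..<n}" and "imcor_step_with n E A js B"
  shows "negative_agents n B \<subseteq> negative_agents n A"
  using imcor_step_imbalance_nonneg[OF assms] by (force simp: negative_agents_def)

lemma imcor_step_positive_agents_subset:
  assumes E: "E \<subseteq> {..<n} \<times> {..<n}" and step: "imcor_step_with n E A js B"
  shows "positive_agents n B \<subseteq> js ` positive_agents n A"
proof
  fix i assume "i \<in> positive_agents n B"
  then have i: "i < n" "0 < imbalance n B i" by (auto simp: positive_agents_def)
  show "i \<in> js ` positive_agents n A"
  proof (rule ccontr)
    assume "i \<notin> js ` positive_agents n A"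
    then have "(\<Sum>l<n. if 0 < imbalance n A l \<and> js l = i then imbalance n A l else 0) = 0"
      by (intro sum.neutral) (auto simp: positive_agents_def)
    with i show False by (simp add: imbalance_imcor_step[OF E step])
  qed
qed

lemma imcor_step_choice_positive:
  assumes E: "E \<subseteq> {..<n} \<times> {..<n}" and step: "imcor_step_with n E A js B"
    and l: "l \<in> positive_agents n A" and nonneg: "0 \<le> imbalance n A (js l)"
  shows "js l \<in> positive_agents n B"
proof -
  have ln: "l < n" "0 < imbalance n A l" using l by (auto simp: positive_agents_def)
  have jsn: "js l < n" by (rule imcor_step_choice[OF E step ln(1)])
  let ?push = "\<lambda>l'. if 0 < imbalance n A l' \<and> js l' = js l then imbalance n A l' else 0"
  have "imbalance n A l \<le> (\<Sum>l'<n. ?push l')"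
    using member_le_sum[of l "{..<n}" ?push] ln by simp
  with nonneg ln(2) have "0 < imbalance n B (js l)"
    by (simp add: imbalance_imcor_step[OF E step jsn])
  with jsn show ?thesis by (simp add: positive_agents_def)
qed

text \<open>A positive agent pushing to a negative one would lose a positive agent, since the
  target stays negative; as the target is a minimiser, no out-neighbour can be negative.\<close>
lemma imcor_step_stable_out_nbrs_nonneg:
  assumes E: "E \<subseteq> {..<n} \<times> {..<n}" and step: "imcor_step_with n E A js B"
    and neg_eq: "negative_agents n B = negative_agents n A"
    and card_eq: "card (positive_agents n B) = card (positive_agents n A)"
    and l: "l \<in> positive_agents n A" and li: "(l, i) \<in> E"
  shows "0 \<le> imbalance n A i"
proof (rule ccontr)
  assume "\<not> 0 \<le> imbalance n A i"
  moreover have ln: "l < n" using l by (simp add: positive_agents_def)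
  moreover have "js l < n" and "imbalance n A (js l) \<le> imbalance n A i"
    using imcor_step_choice(3)[OF E step ln]
      Omega_min_le[OF finite_out_nbrs[OF E] imcor_step_choice(1)[OF E step ln] li] by auto
  ultimately have "js l \<in> negative_agents n A"
    by (simp add: negative_agents_def)
  then have "js l \<in> negative_agents n B" using neg_eq by simp
  then have "js l \<notin> positive_agents n B"
    by (simp add: negative_agents_def positive_agents_def)
  then have "positive_agents n B \<subseteq> js ` positive_agents n A - {js l}"
    using imcor_step_positive_agents_subset[OF E step] by blast
  then have "card (positive_agents n B) \<le> card (js ` positive_agents n A - {js l})"
    by (intro card_mono) auto
  also have "\<dots> = card (js ` positive_agents n A) - 1"
    using l by (simp add: card_Diff_singleton)
  moreover have "card (js ` positive_agents n A) \<le> card (positive_agents n A)"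
    by (simp add: card_image_le)
  moreover have "0 < card (positive_agents n A)"
    using l by (auto simp: card_gt_0_iff)
  ultimately show False using card_eq by linarith
qed

lemma imcor_step_balanced_fixpoint:
  assumes E: "E \<subseteq> {..<n} \<times> {..<n}" and step: "imcor_step_with n E A js B"
    and bal: "weight_balanced n A" and adj: "in_Adj n E A"
  shows "B = A"
proof (intro ext)
  fix i j
  show "B i j = A i j"
  proof (cases "i < n \<and> j < n")
    case True
    then show ?thesis using step bal unfolding imcor_step_with_def weight_balanced_def by auto
  next
    case False
    then have "(i, j) \<notin> E" using E by auto
    then show ?thesis using step adj unfolding imcor_step_with_def in_Adj_def by metis
  qed
qed

lemma antimono_nat_eventually_const:
  fixes f :: "nat \<Rightarrow> nat"
  assumes "\<And>k. f (Suc k) \<le> f k"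
  shows "\<exists>T. \<forall>k\<ge>T. f k = f T"
proof -
  obtain T where T: "\<And>k. f T \<le> f k" using ex_has_least_nat[of "\<lambda>_. True" _ f] by blast
  have "f k \<le> f T" if "T \<le> k" for k using lift_Suc_antimono_le[of f] assms that by blast
  with T show ?thesis by (metis le_antisym)
qed

lemma fair_decisions_frequently_chooses:
  assumes fair: "fair_decisions n E A c" and E: "E \<subseteq> {..<n} \<times> {..<n}" and j: "j < n"
    and choice: "\<And>k. c k j \<in> Omega_min n E (A k) j"
    and ties: "\<exists>\<^sub>\<infinity>k. 0 < imbalance n (A k) j \<and> i \<in> Omega_min n E (A k) j"
  shows "\<exists>\<^sub>\<infinity>k. 0 < imbalance n (A k) j \<and> c k j = i"
  unfolding INFM_nat_le
proof
  fix T
  define K where "K = {k. (0 < imbalance n (A k) j \<and> i \<in> Omega_min n E (A k) j) \<and> T \<le> k}"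
  have "infinite K"
    using INFM_conjI[OF ties MOST_ge_nat[of T]] unfolding K_def INFM_iff_infinite .
  moreover have Omega_sub: "Omega_min n E (A k) j \<subseteq> {..<n}" for k
    using E by (auto simp: Omega_min_def out_nbrs_def)
  then have "(\<lambda>k. Omega_min n E (A k) j) ` K \<subseteq> Pow {..<n}" by blast
  then have "finite ((\<lambda>k. Omega_min n E (A k) j) ` K)" by (rule finite_subset) simp
  ultimately obtain k0 where "k0 \<in> K"
    and inf_K': "infinite {k \<in> K. Omega_min n E (A k) j = Omega_min n E (A k0) j}"
    using pigeonhole_infinite by blast
  define S where "S = Omega_min n E (A k0) j"
  define K' where "K' = {k \<in> K. Omega_min n E (A k) j = S}"
  have k0: "k0 \<in> K'" using \<open>k0 \<in> K\<close> by (simp add: K'_def S_def)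
  have i_S: "i \<in> S" and fin_S: "finite S"
    using k0 Omega_sub[of k0] finite_subset by (auto simp: K'_def K_def S_def)
  have tie: "tie_time n E A j S k" if "k \<in> K'" for k
    using that by (simp add: tie_time_def K'_def K_def)
  show "\<exists>k\<ge>T. 0 < imbalance n (A k) j \<and> c k j = i"
  proof (cases "card S \<le> 1")
    case True
    then have "c k0 j = i"
      using card_le_Suc0_iff_eq[OF fin_S] i_S choice[of k0] k0 by (auto simp: K'_def)
    with k0 show ?thesis by (auto simp: K'_def K_def)
  next
    case False
    have "finite ((\<lambda>k. c k j) ` K')"
      by (rule finite_subset[OF _ fin_S]) (use choice in \<open>auto simp: K'_def\<close>)
    with inf_K' obtain k1 where k1: "k1 \<in> K'" and "infinite {k \<in> K'. c k j = c k1 j}"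
      using pigeonhole_infinite[of K'] unfolding K'_def S_def by blast
    then obtain k2 where "Suc k1 \<le> k2" "k2 \<in> K'" "c k2 j = c k1 j"
      unfolding infinite_nat_iff_unbounded_le by blast
    then have "S \<subseteq> {c m j | m. k1 \<le> m \<and> m < k2 \<and> tie_time n E A j S m}"
      using fair j False tie k1 unfolding fair_decisions_def by (simp add: Suc_le_eq)
    with i_S obtain m where "k1 \<le> m" "tie_time n E A j S m" "c m j = i" by blast
    moreover from k1 \<open>k1 \<le> m\<close> have "T \<le> m" by (simp add: K'_def K_def)
    ultimately show ?thesis by (auto simp: tie_time_def)
  qed
qed

locale imcor_evolution =
  fixes n :: nat and E :: "(nat \<times> nat) set"
    and A :: "nat \<Rightarrow> nat \<Rightarrow> nat \<Rightarrow> real" and c :: "nat \<Rightarrow> nat \<Rightarrow> nat"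
  assumes edges_bounded: "E \<subseteq> {..<n} \<times> {..<n}"
    and initial_Adj: "in_Adj n E (A 0)"
    and imcor_steps: "\<And>k. imcor_step_with n E (A k) (c k) (A (Suc k))"
begin

lemma in_Adj: "in_Adj n E (A k)"
  using initial_Adj imcor_steps by (cases k) (auto simp: imcor_step_with_def)

lemma weight_balanced_stays:
  assumes "weight_balanced n (A K)" and "K \<le> k"
  shows "A k = A K"
  using assms(2)
proof (induction k rule: dec_induct)
  case (step k)
  with assms(1) show ?case
    using imcor_step_balanced_fixpoint[OF edges_bounded imcor_steps _ in_Adj] by simp
qed simp

lemma negative_agents_antimono: "k \<le> k' \<Longrightarrow> negative_agents n (A k') \<subseteq> negative_agents n (A k)"
  using lift_Suc_antimono_le[of "\<lambda>k. negative_agents n (A k)"]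
    imcor_step_negative_agents_subset[OF edges_bounded imcor_steps] by blast

lemma card_positive_agents_Suc_le:
  "card (positive_agents n (A (Suc k))) \<le> card (positive_agents n (A k))"
proof -
  have "card (positive_agents n (A (Suc k))) \<le> card (c k ` positive_agents n (A k))"
    using imcor_step_positive_agents_subset[OF edges_bounded imcor_steps] by (intro card_mono) auto
  also have "\<dots> \<le> card (positive_agents n (A k))" by (rule card_image_le) simp
  finally show ?thesis .
qed

lemma eventually_agent_counts_const:
  "\<exists>T. \<forall>k\<ge>T. negative_agents n (A k) = negative_agents n (A T)
     \<and> card (positive_agents n (A k)) = card (positive_agents n (A T))"
proof -
  have "card (negative_agents n (A (Suc k))) \<le> card (negative_agents n (A k))" for k
    by (intro card_mono negative_agents_antimono) simp_all
  then obtain T1 where T1: "\<forall>k\<ge>T1. card (negative_agents n (A k)) = card (negative_agents n (A T1))"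
    using antimono_nat_eventually_const[of "\<lambda>k. card (negative_agents n (A k))"] by blast
  obtain T2 where T2: "\<forall>k\<ge>T2. card (positive_agents n (A k)) = card (positive_agents n (A T2))"
    using antimono_nat_eventually_const[of "\<lambda>k. card (positive_agents n (A k))"]
      card_positive_agents_Suc_le by blast
  define T where "T = max T1 T2"
  have "negative_agents n (A k) = negative_agents n (A T)"
    and "card (positive_agents n (A k)) = card (positive_agents n (A T))" if "T \<le> k" for k
  proof -
    have "T1 \<le> T" "T2 \<le> T" by (simp_all add: T_def)
    with that T1 T2 have "card (negative_agents n (A k)) = card (negative_agents n (A T))"
      and "card (positive_agents n (A k)) = card (positive_agents n (A T))"
      by (metis order_trans)+
    moreover have "negative_agents n (A k) \<subseteq> negative_agents n (A T)"
      using negative_agents_antimono[OF that] .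
    ultimately show "negative_agents n (A k) = negative_agents n (A T)"
      and "card (positive_agents n (A k)) = card (positive_agents n (A T))"
      using card_subset_eq[OF finite_negative_agents] by auto
  qed
  then show ?thesis by blast
qed

lemma eventually_positive_out_nbrs_nonneg:
  "\<forall>\<^sub>\<infinity>k. \<forall>j\<in>positive_agents n (A k). \<forall>i. (j, i) \<in> E \<longrightarrow> 0 \<le> imbalance n (A k) i"
proof -
  obtain T where T: "\<forall>k\<ge>T. negative_agents n (A k) = negative_agents n (A T)
      \<and> card (positive_agents n (A k)) = card (positive_agents n (A T))"
    using eventually_agent_counts_const by blast
  have "\<forall>j\<in>positive_agents n (A k). \<forall>i. (j, i) \<in> E \<longrightarrow> 0 \<le> imbalance n (A k) i"
    if "T \<le> k" for k
    using imcor_step_stable_out_nbrs_nonneg[OF edges_bounded imcor_steps] T that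
    by (metis le_SucI)
  then show ?thesis unfolding MOST_nat_le by blast
qed

lemma frequently_positive_successor:
  assumes fair: "fair_decisions n E A c" and ji: "(j, i) \<in> E"
    and j_freq: "\<exists>\<^sub>\<infinity>k. j \<in> positive_agents n (A k)"
  shows "\<exists>\<^sub>\<infinity>k. i \<in> positive_agents n (A k)"
proof (rule ccontr)
  assume "\<not> ?thesis"
  then have i_eventually: "\<forall>\<^sub>\<infinity>k. i \<notin> positive_agents n (A k)" by simp
  have j: "j < n" and i: "i < n" using ji edges_bounded by auto
  let ?out_nbrs_nonneg = "\<lambda>k. \<forall>j\<in>positive_agents n (A k). \<forall>i. (j, i) \<in> E \<longrightarrow> 0 \<le> imbalance n (A k) i"
  have "\<exists>\<^sub>\<infinity>k. 0 < imbalance n (A k) j \<and> i \<in> Omega_min n E (A k) j"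
  proof (rule INFM_mono)
    show "\<exists>\<^sub>\<infinity>k. j \<in> positive_agents n (A k) \<and> i \<notin> positive_agents n (A k) \<and> ?out_nbrs_nonneg k"
      using j_freq i_eventually eventually_positive_out_nbrs_nonneg
      by (intro INFM_conjI MOST_conjI)
  next
    fix k
    assume k: "j \<in> positive_agents n (A k) \<and> i \<notin> positive_agents n (A k) \<and> ?out_nbrs_nonneg k"
    then have "imbalance n (A k) i = 0"
      using ji i by (force simp: positive_agents_def)
    with k have "i \<in> Omega_min n E (A k) j"
      using ji by (intro Omega_minI finite_out_nbrs[OF edges_bounded]) auto
    with k show "0 < imbalance n (A k) j \<and> i \<in> Omega_min n E (A k) j"
      by (simp add: positive_agents_def)
  qed
  then have "\<exists>\<^sub>\<infinity>k. 0 < imbalance n (A k) j \<and> c k j = i"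
    using fair_decisions_frequently_chooses[OF fair edges_bounded j]
      imcor_step_choice(1)[OF edges_bounded imcor_steps j] by blast
  moreover have "\<forall>\<^sub>\<infinity>k. i \<notin> positive_agents n (A (Suc k)) \<and> ?out_nbrs_nonneg k"
    using MOST_SucI[OF i_eventually] eventually_positive_out_nbrs_nonneg by (rule MOST_conjI)
  ultimately obtain k where "0 < imbalance n (A k) j" "c k j = i"
    and "i \<notin> positive_agents n (A (Suc k))" "?out_nbrs_nonneg k"
    using INFM_conjI INFM_EX by blast
  with j ji show False
    using imcor_step_choice_positive[OF edges_bounded imcor_steps, of j k]
    by (auto simp: positive_agents_def)
qed

lemma frequently_positive_everywhere:
  assumes fair: "fair_decisions n E A c" and sc: "strongly_connected n E"
    and j_freq: "\<exists>\<^sub>\<infinity>k. j \<in> positive_agents n (A k)" and i: "i < n"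
  shows "\<exists>\<^sub>\<infinity>k. i \<in> positive_agents n (A k)"
proof (cases "i = j")
  case False
  have "j < n"
    using j_freq by (auto elim: INFM_E simp: positive_agents_def)
  with False i sc have "(j, i) \<in> E\<^sup>+" by (simp add: strongly_connected_def)
  then show ?thesis
    by (induction rule: trancl_induct)
      (use j_freq frequently_positive_successor[OF fair] in blast)+
qed (use j_freq in simp)

lemma ex_frequently_positive_agent:
  assumes "\<And>k. positive_agents n (A k) \<noteq> {}"
  shows "\<exists>j. \<exists>\<^sub>\<infinity>k. j \<in> positive_agents n (A k)"
proof -
  have "\<exists>\<^sub>\<infinity>k. \<exists>j\<in>{..<n}. j \<in> positive_agents n (A k)"
    using assms by (intro MOST_INFM ALL_MOST) (auto simp: positive_agents_def)
  then show ?thesis by (auto simp: INFM_finite_Bex_distrib)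
qed

end

theorem theorem4p7:
  fixes n :: nat and E :: "(nat \<times> nat) set"
    and A :: "nat \<Rightarrow> nat \<Rightarrow> nat \<Rightarrow> real" and c :: "nat \<Rightarrow> nat \<Rightarrow> nat"
  assumes "E \<subseteq> {..<n} \<times> {..<n}"
    and "strongly_connected n E"
    and "in_Adj n E (A 0)"
    and "\<forall>k. imcor_step_with n E (A k) (c k) (A (Suc k))"
    and "fair_decisions n E A c"
  shows "\<exists>K. weight_balanced n (A K) \<and> (\<forall>k\<ge>K. A k = A K)"
proof -
  interpret imcor_evolution n E A c
    using assms(1,3,4) by unfold_locales auto
  show ?thesis
  proof (cases "\<exists>K. weight_balanced n (A K)")
    case True
    then show ?thesis using weight_balanced_stays by blast
  next
    case False
    then have positive: "positive_agents n (A k) \<noteq> {}" for k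
      by (simp add: weight_balanced_iff_no_positive_agents)
    then obtain j where j: "\<exists>\<^sub>\<infinity>k. j \<in> positive_agents n (A k)"
      using ex_frequently_positive_agent by blast
    obtain T where T: "\<forall>k\<ge>T. negative_agents n (A k) = negative_agents n (A T)"
      using eventually_agent_counts_const by blast
    obtain u where u: "u \<in> negative_agents n (A T)"
      using negative_agents_nonempty[OF positive] by blast
    then have "\<exists>\<^sub>\<infinity>k. u \<in> positive_agents n (A k)"
      using frequently_positive_everywhere[OF assms(5,2) j] by (simp add: negative_agents_def)
    then obtain k where "T \<le> k" and u_positive: "u \<in> positive_agents n (A k)"
      unfolding INFM_nat_le by blast
    with T have "negative_agents n (A k) = negative_agents n (A T)" by blast
    with u have "u \<in> negative_agents n (A k)" by simp
    with u_positive show ?thesis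
      by (simp add: positive_agents_def negative_agents_def)
  qed
qed

end
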